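(* Let $D$ be a finite directed graph with $n$ vertices having two distinct complete sources $c$ and $c'$. Let $\mathcal{T}_c$ be the set of spanning rooted directed trees $T$ of $D$ (subgraphs of $D$ containing all vertices) in which $c$ is a leaf. For $T\in\mathcal{T}_c$ let $S_T$ be the subcomplex defined below. Then $S_T\subseteq\Delta(D)$ for each $T\in\mathcal{T}_c$ and $$\Delta(D)=\bigcup_{T\in\mathcal{T}_c}S_T .$$ Definition of $S_T$: let $x_1$ be the root of $T$ and $x_1\to x_2\to\cdots\to x_k\to c$ the unique directed path in $T$ from $x_1$ to $c$; let $\sigma_T=\{\overrightarrow{x_1x_2},\ldots,\overrightarrow{x_{k-1}x_k},\overrightarrow{x_kc},\overrightarrow{cx_1}\}$ and let $\partial\sigma_T$ be the complex of all proper subsets of $\sigma_T$. Let $y_1,\ldots,y_r$ ($r=n-k-1$) be the remaining vertices of $D$, and for each $j$ let $z_j$ be the unique vertex with $\overrightarrow{z_jy_j}\in E(T)$. Then $$S_T=\partial\sigma_T*\{\overrightarrow{z_1y_1},\overrightarrow{cy_1}\}*\cdots*\{\overrightarrow{z_ry_r},\overrightarrow{cy_r}\},$$ where $*$ is the join of simplicial complexes and $\{a,b\}$ denotes the $0$-dimensional complex with the two vertices $a,b$ and no edge.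
   Context: For a finite directed graph $D$ (no loops, no multiple edges), the complex of directed trees $\Delta(D)$ has the directed edges of $D$ as vertices, and its faces are the edge sets of directed forests in $D$ (vertex-disjoint unions of rooted directed trees; equivalently, edge sets in which every vertex has in-degree at most $1$ and there is no directed cycle). A rooted directed tree with root $r$ is an acyclic digraph in which each vertex is reached from $r$ by a unique directed path; a leaf is a vertex of out-degree $0$ in the tree. A vertex $c$ of $D$ is a complete source if $\overrightarrow{cy}\in E(D)$ for every vertex $y\neq c$. We write $\overrightarrow{xy}$ for the directed edge from $x$ to $y$. *)

theory Defs
  imports Main
begin

text \<open>A finite digraph D is given by a vertex set V and an edge relation E \<subseteq> V \<times> V
  (pairs (x,y) stand for the directed edge from x to y); no loops.\<close>

definition digraph :: "'a set \<Rightarrow> ('a \<times> 'a) set \<Rightarrow> bool" where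
  "digraph V E \<longleftrightarrow> finite V \<and> E \<subseteq> V \<times> V \<and> (\<forall>x. (x, x) \<notin> E)"

definition complete_source :: "'a set \<Rightarrow> ('a \<times> 'a) set \<Rightarrow> 'a \<Rightarrow> bool" where
  "complete_source V E c \<longleftrightarrow> c \<in> V \<and> (\<forall>y\<in>V. y \<noteq> c \<longrightarrow> (c, y) \<in> E)"

definition directed_forest :: "('a \<times> 'a) set \<Rightarrow> ('a \<times> 'a) set \<Rightarrow> bool" where
  "directed_forest E F \<longleftrightarrow> F \<subseteq> E \<and> (\<forall>y. card {x. (x, y) \<in> F} \<le> 1 \<and> finite {x. (x, y) \<in> F})
     \<and> acyclic F"

text \<open>The complex of directed trees, as its set of faces.\<close>
definition tree_complex :: "('a \<times> 'a) set \<Rightarrow> ('a \<times> 'a) set set" where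
  "tree_complex E = {F. directed_forest E F}"

definition dpath :: "('a \<times> 'a) set \<Rightarrow> 'a \<Rightarrow> 'a \<Rightarrow> 'a list \<Rightarrow> bool" where
  "dpath T u v xs \<longleftrightarrow> xs \<noteq> [] \<and> hd xs = u \<and> last xs = v \<and> distinct xs \<and>
     (\<forall>i. Suc i < length xs \<longrightarrow> (xs ! i, xs ! Suc i) \<in> T)"

definition rooted_tree :: "'a set \<Rightarrow> ('a \<times> 'a) set \<Rightarrow> 'a \<Rightarrow> bool" where
  "rooted_tree V T r \<longleftrightarrow> T \<subseteq> V \<times> V \<and> r \<in> V \<and> acyclic T \<and>
     (\<forall>v\<in>V. \<exists>!xs. dpath T r v xs)"

definition spanning_tree :: "'a set \<Rightarrow> ('a \<times> 'a) set \<Rightarrow> ('a \<times> 'a) set \<Rightarrow> bool" where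
  "spanning_tree V E T \<longleftrightarrow> T \<subseteq> E \<and> (\<exists>r. rooted_tree V T r)"

definition tree_root :: "'a set \<Rightarrow> ('a \<times> 'a) set \<Rightarrow> 'a" where
  "tree_root V T = (THE r. rooted_tree V T r)"

definition is_leaf :: "'a set \<Rightarrow> ('a \<times> 'a) set \<Rightarrow> 'a \<Rightarrow> bool" where
  "is_leaf V T c \<longleftrightarrow> c \<in> V \<and> (\<forall>y. (c, y) \<notin> T)"

definition trees_leaf :: "'a set \<Rightarrow> ('a \<times> 'a) set \<Rightarrow> 'a \<Rightarrow> ('a \<times> 'a) set set" where
  "trees_leaf V E c = {T. spanning_tree V E T \<and> is_leaf V T c}"

text \<open>Simplicial complexes as sets of faces. Join of an indexed family of complexes
  (with pairwise disjoint vertex sets), boundary of a simplex, 0-dim complex on two vertices.\<close>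
definition join :: "'b set set \<Rightarrow> 'b set set \<Rightarrow> 'b set set" where
  "join K L = {A \<union> B | A B. A \<in> K \<and> B \<in> L}"

definition join_family :: "'i set \<Rightarrow> ('i \<Rightarrow> 'b set set) \<Rightarrow> 'b set set" where
  "join_family I K = {\<Union>i\<in>I. f i | f. \<forall>i\<in>I. f i \<in> K i}"

definition simplex_boundary :: "'b set \<Rightarrow> 'b set set" where
  "simplex_boundary \<sigma> = {A. A \<subset> \<sigma>}"

definition two_points :: "'b \<Rightarrow> 'b \<Rightarrow> 'b set set" where
  "two_points a b = {{}, {a}, {b}}"

text \<open>The path x_1 -> ... -> x_k -> c from the root to c (as list [x_1,...,x_k,c]).\<close>
definition root_path :: "'a set \<Rightarrow> ('a \<times> 'a) set \<Rightarrow> 'a \<Rightarrow> 'a list" where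
  "root_path V T c = (THE xs. dpath T (tree_root V T) c xs)"

definition sigma_T :: "'a set \<Rightarrow> ('a \<times> 'a) set \<Rightarrow> 'a \<Rightarrow> ('a \<times> 'a) set" where
  "sigma_T V T c = (let P = root_path V T c in
      {(P ! i, P ! Suc i) | i. Suc i < length P} \<union> {(c, tree_root V T)})"

definition parent :: "('a \<times> 'a) set \<Rightarrow> 'a \<Rightarrow> 'a" where
  "parent T y = (THE z. (z, y) \<in> T)"

definition S_T :: "'a set \<Rightarrow> ('a \<times> 'a) set \<Rightarrow> 'a \<Rightarrow> ('a \<times> 'a) set set" where
  "S_T V T c = join (simplex_boundary (sigma_T V T c))
      (join_family (V - set (root_path V T c)) (\<lambda>y. two_points (parent T y, y) (c, y)))"

end

theory Submission
  imports Defs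
begin

text \<open>For a spanning tree \<open>T\<close> in which \<open>c\<close> is a leaf, \<open>\<sigma>\<^sub>T\<close> is the directed cycle obtained by
  closing the path from the root to \<open>c\<close> with the edge from \<open>c\<close> back to the root. Its proper
  subsets are acyclic, and every other edge of a face of \<open>S\<^sub>T\<close> enters a vertex off that path either
  from its parent in \<open>T\<close> or from \<open>c\<close>; walks that leave the path never return, so each face is a
  directed forest.

  Conversely, let \<open>F\<close> be a directed forest and \<open>G\<close> the forest obtained by deleting the edges
  of \<open>F\<close> leaving \<open>c\<close>. Hanging the roots of all components of \<open>G\<close> other than that of \<open>c'\<close>
  below the complete source \<open>c'\<close> gives a spanning tree \<open>T\<close> in which \<open>c\<close> is a leaf. An edge of
  \<open>F\<close> entering the root path of \<open>T\<close> lies on \<open>\<sigma>\<^sub>T\<close>: into the root it can only come from \<open>c\<close>,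
  and an edge from \<open>c\<close> into a grafted root would close a cycle with the \<open>G\<close>-path from that root
  to \<open>c\<close>. Since \<open>F\<close> is acyclic it does not contain all of \<open>\<sigma>\<^sub>T\<close>, and every remaining edge of
  \<open>F\<close> comes from the parent in \<open>T\<close> or from \<open>c\<close>; hence \<open>F \<in> S\<^sub>T\<close>.\<close>

section \<open>Directed forests\<close>

definition unique_parents :: "('a \<times> 'a) set \<Rightarrow> bool" where
  "unique_parents T \<longleftrightarrow> (\<forall>x y z. (x, z) \<in> T \<longrightarrow> (y, z) \<in> T \<longrightarrow> x = y)"

lemma unique_parentsD: "unique_parents T \<Longrightarrow> (x, z) \<in> T \<Longrightarrow> (y, z) \<in> T \<Longrightarrow> x = y"
  unfolding unique_parents_def by blast

lemma unique_parents_subset: "unique_parents T \<Longrightarrow> S \<subseteq> T \<Longrightarrow> unique_parents S"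
  unfolding unique_parents_def by blast

lemma directed_forest_iff:
  "directed_forest E F \<longleftrightarrow> F \<subseteq> E \<and> unique_parents F \<and> acyclic F"
proof -
  have "(\<forall>y. card {x. (x, y) \<in> F} \<le> 1 \<and> finite {x. (x, y) \<in> F}) \<longleftrightarrow> unique_parents F"
  proof
    assume "\<forall>y. card {x. (x, y) \<in> F} \<le> 1 \<and> finite {x. (x, y) \<in> F}"
    then show "unique_parents F"
      unfolding unique_parents_def using card_le_Suc0_iff_eq by fastforce
  next
    assume F: "unique_parents F"
    show "\<forall>y. card {x. (x, y) \<in> F} \<le> 1 \<and> finite {x. (x, y) \<in> F}"
    proof
      fix y
      consider "{x. (x, y) \<in> F} = {}" | a where "{x. (x, y) \<in> F} = {a}"
        using F unfolding unique_parents_def by blast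
      then show "card {x. (x, y) \<in> F} \<le> 1 \<and> finite {x. (x, y) \<in> F}"
        by cases auto
    qed
  qed
  then show ?thesis unfolding directed_forest_def by blast
qed

lemma acyclic_if_potential:
  fixes f :: "'a \<Rightarrow> nat"
  assumes "\<And>x y. (x, y) \<in> R \<Longrightarrow> f x < f y"
  shows "acyclic R"
proof -
  have "(x, y) \<in> R\<^sup>+ \<Longrightarrow> f x < f y" for x y
    by (induction rule: trancl_induct) (use assms in fastforce)+
  then show ?thesis unfolding acyclic_def by blast
qed

section \<open>Paths and cycles given by vertex lists\<close>

definition path_edges :: "'a list \<Rightarrow> ('a \<times> 'a) set" where
  "path_edges xs = {(xs ! i, xs ! Suc i) | i. Suc i < length xs}"

definition cycle_edges :: "'a list \<Rightarrow> ('a \<times> 'a) set" where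
  "cycle_edges xs = path_edges xs \<union> {(last xs, hd xs)}"

lemma dpath_iff_path_edges:
  "dpath T u v xs \<longleftrightarrow> xs \<noteq> [] \<and> hd xs = u \<and> last xs = v \<and> distinct xs \<and> path_edges xs \<subseteq> T"
  unfolding dpath_def path_edges_def by blast

lemma path_edges_subset: "path_edges xs \<subseteq> set xs \<times> set xs"
  unfolding path_edges_def by auto

lemma cycle_edges_subset: "xs \<noteq> [] \<Longrightarrow> cycle_edges xs \<subseteq> set xs \<times> set xs"
  unfolding cycle_edges_def using path_edges_subset by fastforce

lemma path_edges_snoc:
  assumes "xs \<noteq> []"
  shows "path_edges (xs @ [x]) = insert (last xs, x) (path_edges xs)"
proof -
  have step: "((xs @ [x]) ! i, (xs @ [x]) ! Suc i) =
      (if Suc i < length xs then (xs ! i, xs ! Suc i) else (last xs, x))"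
    if "Suc i < length (xs @ [x])" for i
  proof (cases "Suc i < length xs")
    case False
    then have "i = length xs - 1" using that by simp
    then show ?thesis using assms False by (simp add: nth_append last_conv_nth)
  qed (simp add: nth_append)
  show ?thesis
  proof (intro equalityI subsetI)
    fix e assume "e \<in> path_edges (xs @ [x])"
    then obtain i where "Suc i < length (xs @ [x])" "e = ((xs @ [x]) ! i, (xs @ [x]) ! Suc i)"
      unfolding path_edges_def by blast
    then show "e \<in> insert (last xs, x) (path_edges xs)"
      using step by (auto simp: path_edges_def)
  next
    fix e assume e: "e \<in> insert (last xs, x) (path_edges xs)"
    have "Suc (length xs - 1) < length (xs @ [x])" "\<not> Suc (length xs - 1) < length xs"
      using assms by auto
    then have "(last xs, x) = ((xs @ [x]) ! (length xs - 1), (xs @ [x]) ! Suc (length xs - 1))"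
      using step[of "length xs - 1"] by simp
    then have "(last xs, x) \<in> path_edges (xs @ [x])"
      using \<open>Suc (length xs - 1) < length (xs @ [x])\<close> unfolding path_edges_def by blast
    moreover have "path_edges xs \<subseteq> path_edges (xs @ [x])"
    proof
      fix e assume "e \<in> path_edges xs"
      then obtain i where "Suc i < length xs" "e = (xs ! i, xs ! Suc i)"
        unfolding path_edges_def by blast
      then have "Suc i < length (xs @ [x])" "e = ((xs @ [x]) ! i, (xs @ [x]) ! Suc i)"
        by (auto simp: nth_append)
      then show "e \<in> path_edges (xs @ [x])" unfolding path_edges_def by blast
    qed
    ultimately show "e \<in> path_edges (xs @ [x])" using e by blast
  qed
qed

lemma nth_rtrancl_path_edges:
  assumes "i \<le> j" "j < length xs"
  shows "(xs ! i, xs ! j) \<in> (path_edges xs)\<^sup>*"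
  using assms
proof (induction j)
  case (Suc j)
  show ?case
  proof (cases "i = Suc j")
    case False
    then have "(xs ! i, xs ! j) \<in> (path_edges xs)\<^sup>*" using Suc by simp
    moreover have "(xs ! j, xs ! Suc j) \<in> path_edges xs"
      using Suc.prems(2) unfolding path_edges_def by blast
    ultimately show ?thesis by (rule rtrancl_into_rtrancl)
  qed simp
qed simp

lemma mem_set_rtrancl_path_edges:
  assumes "xs \<noteq> []" "w \<in> set xs"
  shows "(hd xs, w) \<in> (path_edges xs)\<^sup>*" "(w, last xs) \<in> (path_edges xs)\<^sup>*"
proof -
  obtain j where "j < length xs" "w = xs ! j" using assms(2) by (auto simp: in_set_conv_nth)
  then show "(hd xs, w) \<in> (path_edges xs)\<^sup>*" "(w, last xs) \<in> (path_edges xs)\<^sup>*"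
    using nth_rtrancl_path_edges[of 0 j xs] nth_rtrancl_path_edges[of j "length xs - 1" xs] assms(1)
    by (auto simp: hd_conv_nth last_conv_nth)
qed

lemma mem_set_imp_path_edge:
  assumes "y \<in> set xs" "y \<noteq> hd xs"
  obtains x where "(x, y) \<in> path_edges xs"
proof -
  obtain j where j: "j < length xs" "y = xs ! j" using assms(1) by (auto simp: in_set_conv_nth)
  have "j \<noteq> 0"
  proof
    assume "j = 0"
    with j assms(2) show False by (cases xs) auto
  qed
  then obtain i where "j = Suc i" using not0_implies_Suc by blast
  with j show ?thesis using that unfolding path_edges_def by blast
qed

lemma unique_parents_cycle_edges:
  assumes "distinct xs"
  shows "unique_parents (cycle_edges xs)"
proof -
  have "(x, hd xs) \<notin> path_edges xs" for x
  proof
    assume "(x, hd xs) \<in> path_edges xs"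
    then obtain i where "Suc i < length xs" "hd xs = xs ! Suc i"
      by (auto simp: path_edges_def)
    moreover from this have "hd xs = xs ! 0" by (cases xs) auto
    ultimately have "xs ! 0 = xs ! Suc i" "Suc i < length xs" by auto
    then show False using assms by (subst (asm) nth_eq_iff_index_eq) auto
  qed
  moreover have "a = b" if a_y: "(a, y) \<in> path_edges xs" and b_y: "(b, y) \<in> path_edges xs" for a b y
  proof -
    obtain i where i: "Suc i < length xs" "a = xs ! i" "y = xs ! Suc i"
      using a_y unfolding path_edges_def by blast
    obtain j where j: "Suc j < length xs" "b = xs ! j" "y = xs ! Suc j"
      using b_y unfolding path_edges_def by blast
    from i j assms have "i = j" by (simp add: nth_eq_iff_index_eq)
    with i j show "a = b" by simp
  qed
  ultimately show ?thesis
    unfolding unique_parents_def cycle_edges_def by blast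
qed

lemma not_acyclic_cycle_edges:
  assumes "xs \<noteq> []"
  shows "\<not> acyclic (cycle_edges xs)"
proof -
  have "(hd xs, last xs) \<in> (cycle_edges xs)\<^sup>*"
    using mem_set_rtrancl_path_edges(1)[OF assms last_in_set[OF assms]]
      rtrancl_mono[of "path_edges xs" "cycle_edges xs"]
    by (auto simp: cycle_edges_def)
  then have "(last xs, last xs) \<in> (cycle_edges xs)\<^sup>+"
    by (rule rtrancl_into_trancl2[rotated]) (simp add: cycle_edges_def)
  then show ?thesis unfolding acyclic_def by blast
qed

text \<open>Deleting the edge from the \<open>m\<close>-th to the \<open>m+1\<close>-st vertex opens the cycle into a path
  that starts at the \<open>m+1\<close>-st vertex, so shifting the indices up to \<open>m\<close> by the length gives
  a potential.\<close>
lemma acyclic_psubset_cycle_edges: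
  assumes "distinct xs" "A \<subset> cycle_edges xs"
  shows "acyclic A"
proof -
  define L where "L = length xs"
  define idx where "idx v = (SOME j. j < L \<and> xs ! j = v)" for v
  have idx: "idx (xs ! i) = i" if "i < L" for i
    using that assms(1) unfolding idx_def L_def
    by (intro some_equality) (auto simp: nth_eq_iff_index_eq)
  obtain e where e: "e \<in> cycle_edges xs" "e \<notin> A" using assms(2) by blast
  show ?thesis
  proof (cases "e = (last xs, hd xs)")
    case True
    then have "A \<subseteq> path_edges xs" using assms(2) e by (auto simp: cycle_edges_def)
    moreover have "acyclic (path_edges xs)"
      by (rule acyclic_if_potential[where f = idx]) (auto simp: path_edges_def idx L_def)
    ultimately show ?thesis using acyclic_subset by blast
  next
    case False
    then obtain m where m: "Suc m < L" "e = (xs ! m, xs ! Suc m)"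
      using e by (auto simp: cycle_edges_def path_edges_def L_def)
    then have "xs \<noteq> []" by (auto simp: L_def)
    then have ends: "hd xs = xs ! 0" "last xs = xs ! (L - 1)"
      by (auto simp: hd_conv_nth last_conv_nth L_def)
    show ?thesis
    proof (rule acyclic_if_potential[where f = "\<lambda>v. if idx v \<le> m then idx v + L else idx v"])
      fix x y assume xy: "(x, y) \<in> A"
      then have xy: "(x, y) \<in> cycle_edges xs" "(x, y) \<noteq> e" using assms(2) e by auto
      consider "x = xs ! (L - 1)" "y = xs ! 0"
        | i where "Suc i < L" "i \<noteq> m" "x = xs ! i" "y = xs ! Suc i"
      proof (cases "(x, y) = (last xs, hd xs)")
        case False
        then obtain i where "Suc i < L" "x = xs ! i" "y = xs ! Suc i"
          using xy(1) unfolding cycle_edges_def path_edges_def L_def by blast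
        moreover from this have "i \<noteq> m" using xy(2) m(2) by blast
        ultimately show ?thesis using that(2) by blast
      qed (use that(1) ends in simp)
      then show "(if idx x \<le> m then idx x + L else idx x) < (if idx y \<le> m then idx y + L else idx y)"
      proof cases
        case 1
        then have "idx x = L - 1" "idx y = 0" using m idx by auto
        then show ?thesis using m by auto
      next
        case (2 i)
        then have "idx x = i" "idx y = Suc i" using idx by auto
        then show ?thesis using \<open>i \<noteq> m\<close> by auto
      qed
    qed
  qed
qed

section \<open>Rooted trees\<close>

lemma dpath_rtrancl:
  assumes "dpath T u v xs" "w \<in> set xs"
  shows "(u, w) \<in> T\<^sup>*" "(w, v) \<in> T\<^sup>*"
  using assms mem_set_rtrancl_path_edges[of xs w] rtrancl_mono[of "path_edges xs" T]
  by (auto simp: dpath_iff_path_edges)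

lemma dpath_snoc:
  assumes "dpath T r u xs" "(u, z) \<in> T" "z \<notin> set xs"
  shows "dpath T r z (xs @ [z])"
  using assms by (auto simp: dpath_iff_path_edges path_edges_snoc)

lemma dpath_snocD:
  assumes "dpath T r v (xs @ [x])" "xs \<noteq> []"
  shows "dpath T r (last xs) xs" "(last xs, v) \<in> T" "x = v" "v \<noteq> r"
  using assms by (auto simp: dpath_iff_path_edges path_edges_snoc)

lemma rtrancl_imp_dpath:
  assumes "(r, v) \<in> T\<^sup>*" "acyclic T"
  obtains xs where "dpath T r v xs"
  using assms(1)
proof (induction arbitrary: thesis rule: rtrancl_induct)
  case base
  have "dpath T r r [r]" by (simp add: dpath_def)
  then show ?case by (rule base)
next
  case (step u v)
  then obtain xs where xs: "dpath T r u xs" by blast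
  have "v \<notin> set xs"
  proof
    assume "v \<in> set xs"
    then have "(v, u) \<in> T\<^sup>*" using dpath_rtrancl[OF xs] by blast
    then have "(v, v) \<in> T\<^sup>+" using step(2) by (rule rtrancl_into_trancl1)
    then show False using assms(2) by (simp add: acyclic_def)
  qed
  then show ?case using dpath_snoc[OF xs step(2)] step.prems by blast
qed

lemma dpath_unique:
  assumes "unique_parents T" "dpath T r v xs" "dpath T r v ys"
  shows "xs = ys"
  using assms(2,3)
proof (induction xs arbitrary: v ys rule: rev_induct)
  case Nil
  then show ?case by (simp add: dpath_def)
next
  case (snoc x xs)
  obtain ys' y where ys: "ys = ys' @ [y]"
    using snoc.prems(2) by (metis dpath_def rev_exhaust)
  show ?case
  proof (cases "xs = []")
    case True
    then have "v = r" using snoc.prems(1) by (auto simp: dpath_def)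
    have "ys' = []"
    proof (rule ccontr)
      assume "ys' \<noteq> []"
      with snoc.prems(2) ys have "v \<noteq> r" by (simp add: dpath_snocD(4))
      with \<open>v = r\<close> show False by simp
    qed
    then show ?thesis using True ys snoc.prems by (simp add: dpath_def)
  next
    case False
    note xs = dpath_snocD[OF snoc.prems(1) False]
    have "ys' \<noteq> []"
    proof
      assume "ys' = []"
      with snoc.prems(2) ys have "r = v" by (auto simp: dpath_def)
      with xs(4) show False by simp
    qed
    note ys' = dpath_snocD[OF snoc.prems(2)[unfolded ys] this]
    have "last xs = last ys'" using assms(1) xs(2) ys'(2) by (rule unique_parentsD)
    then have "xs = ys'" using snoc.IH xs(1) ys'(1) by metis
    then show ?thesis using xs(3) ys'(3) ys by simp
  qed
qed

lemma rooted_tree_unique_parents: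
  assumes "rooted_tree V T r"
  shows "unique_parents T"
  unfolding unique_parents_def
proof (intro allI impI)
  fix x y z assume xz: "(x, z) \<in> T" and yz: "(y, z) \<in> T"
  have TV: "T \<subseteq> V \<times> V" and ac: "acyclic T" and P: "\<forall>v\<in>V. \<exists>!xs. dpath T r v xs"
    using assms by (auto simp: rooted_tree_def)
  have fresh: "z \<notin> set xs" if "dpath T r w xs" "(w, z) \<in> T" for w xs
  proof
    assume "z \<in> set xs"
    then have "(z, w) \<in> T\<^sup>*" using dpath_rtrancl(2)[OF that(1)] by blast
    then have "(z, z) \<in> T\<^sup>+" using that(2) by (rule rtrancl_into_trancl1)
    then show False using ac by (simp add: acyclic_def)
  qed
  obtain xs ys where xs: "dpath T r x xs" and ys: "dpath T r y ys"
    using P TV xz yz by blast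
  have "dpath T r z (xs @ [z])" "dpath T r z (ys @ [z])"
    using dpath_snoc[OF xs xz fresh[OF xs xz]] dpath_snoc[OF ys yz fresh[OF ys yz]] .
  moreover have "\<exists>!zs. dpath T r z zs" using P TV xz by blast
  ultimately have "xs @ [z] = ys @ [z]" by (simp add: Ex1_def) blast
  then have "xs = ys" by simp
  then show "x = y" using xs ys by (simp add: dpath_def)
qed

lemma rooted_tree_iff:
  "rooted_tree V T r \<longleftrightarrow>
    T \<subseteq> V \<times> V \<and> r \<in> V \<and> acyclic T \<and> unique_parents T \<and> (\<forall>v\<in>V. (r, v) \<in> T\<^sup>*)"
proof
  assume R: "rooted_tree V T r"
  moreover have "(r, v) \<in> T\<^sup>*" if "v \<in> V" for v
    using R that dpath_rtrancl(1)[of T r v _ v] by (auto simp: rooted_tree_def dpath_def)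
  ultimately show "T \<subseteq> V \<times> V \<and> r \<in> V \<and> acyclic T \<and> unique_parents T \<and> (\<forall>v\<in>V. (r, v) \<in> T\<^sup>*)"
    using rooted_tree_unique_parents[OF R] by (auto simp: rooted_tree_def)
next
  assume "T \<subseteq> V \<times> V \<and> r \<in> V \<and> acyclic T \<and> unique_parents T \<and> (\<forall>v\<in>V. (r, v) \<in> T\<^sup>*)"
  moreover have "\<exists>!xs. dpath T r v xs" if "v \<in> V" and "(r, v) \<in> T\<^sup>*" "acyclic T" "unique_parents T"
    for v
    using that rtrancl_imp_dpath dpath_unique by (metis (no_types, lifting))
  ultimately show "rooted_tree V T r" unfolding rooted_tree_def by blast
qed

lemma rooted_tree_root_unique:
  assumes "rooted_tree V T r" "rooted_tree V T s"
  shows "r = s"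
proof (rule ccontr)
  assume "r \<noteq> s"
  have "(r, s) \<in> T\<^sup>*" "(s, r) \<in> T\<^sup>*" "acyclic T" using assms by (auto simp: rooted_tree_iff)
  with \<open>r \<noteq> s\<close> have "(r, s) \<in> T\<^sup>+" by (simp add: rtrancl_eq_or_trancl)
  then have "(r, r) \<in> T\<^sup>+" using \<open>(s, r) \<in> T\<^sup>*\<close> by (rule trancl_rtrancl_trancl)
  then show False using \<open>acyclic T\<close> by (simp add: acyclic_def)
qed

lemma tree_root_eq: "rooted_tree V T r \<Longrightarrow> tree_root V T = r"
  unfolding tree_root_def by (rule the_equality) (auto intro: rooted_tree_root_unique)

lemma root_path_dpath:
  assumes "rooted_tree V T r" "v \<in> V"
  shows "dpath T r v (root_path V T v)"
proof -
  have "\<exists>!xs. dpath T r v xs" using assms by (simp add: rooted_tree_def)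
  then show ?thesis unfolding root_path_def tree_root_eq[OF assms(1)] by (rule theI')
qed

lemma parent_eq: "unique_parents T \<Longrightarrow> (z, y) \<in> T \<Longrightarrow> parent T y = z"
  unfolding parent_def by (rule the_equality) (auto intro: unique_parentsD)

lemma parent_in_tree:
  assumes "rooted_tree V T r" "y \<in> V" "y \<noteq> r"
  shows "(parent T y, y) \<in> T"
proof -
  have "(r, y) \<in> T\<^sup>*" "unique_parents T" using assms by (auto simp: rooted_tree_iff)
  then obtain z where "(z, y) \<in> T" using assms(3) by (metis rtranclE)
  then show ?thesis using parent_eq[OF \<open>unique_parents T\<close>] by simp
qed

section \<open>Grafting the components of a forest onto a vertex\<close>

lemma unique_parents_rtrancl_comparable:
  assumes "unique_parents G" "(a, x) \<in> G\<^sup>*" "(b, x) \<in> G\<^sup>*"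
  shows "(a, b) \<in> G\<^sup>* \<or> (b, a) \<in> G\<^sup>*"
  using assms(2,3)
proof (induction arbitrary: b rule: rtrancl_induct)
  case (step y z)
  from step.prems show ?case
  proof (cases rule: rtranclE)
    case base
    then show ?thesis using step.hyps by (meson rtrancl_into_rtrancl)
  next
    case (step w)
    then have "w = y" using \<open>(y, z) \<in> G\<close> assms(1) by (blast intro: unique_parentsD)
    then show ?thesis using step(1) \<open>(b, y) \<in> G\<^sup>* \<Longrightarrow> _\<close> by blast
  qed
qed simp

lemma sources_rtrancl_unique:
  assumes "unique_parents G" "(a, v) \<in> G\<^sup>*" "(b, v) \<in> G\<^sup>*"
    and "\<forall>z. (z, a) \<notin> G" "\<forall>z. (z, b) \<notin> G"
  shows "a = b"
proof -
  have no_parent_eq: "p = q" if "(p, q) \<in> G\<^sup>*" "\<forall>z. (z, q) \<notin> G" for p q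
    using that by (cases rule: rtranclE) auto
  from unique_parents_rtrancl_comparable[OF assms(1-3)] show ?thesis
    using no_parent_eq assms(4,5) by metis
qed

lemma finite_acyclic_obtain_source:
  assumes "finite G" "acyclic G"
  obtains a where "(a, v) \<in> G\<^sup>*" "\<forall>z. (z, a) \<notin> G"
proof -
  have "wf G" using assms by (rule finite_acyclic_wf)
  moreover have "v \<in> {u. (u, v) \<in> G\<^sup>*}" by simp
  ultimately obtain a where a: "a \<in> {u. (u, v) \<in> G\<^sup>*}"
    and min: "\<And>y. (y, a) \<in> G \<Longrightarrow> y \<notin> {u. (u, v) \<in> G\<^sup>*}"
    by (rule wfE_min) blast
  have "\<forall>z. (z, a) \<notin> G"
  proof (intro allI notI)
    fix z assume "(z, a) \<in> G"
    moreover from this a have "(z, v) \<in> G\<^sup>*" by (simp add: converse_rtrancl_into_rtrancl)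
    ultimately show False using min by blast
  qed
  with a show ?thesis using that by blast
qed

text \<open>The sources \<open>u\<close> that do not reach \<open>v\<close> are the roots of the components of \<open>G\<close> other
  than that of \<open>v\<close>.\<close>
definition graft :: "'a set \<Rightarrow> ('a \<times> 'a) set \<Rightarrow> 'a \<Rightarrow> ('a \<times> 'a) set" where
  "graft V G v = G \<union> {(v, u) | u. u \<in> V \<and> (\<forall>z. (z, u) \<notin> G) \<and> (u, v) \<notin> G\<^sup>*}"

lemma graft_cases:
  assumes "(x, y) \<in> graft V G v"
  obtains "(x, y) \<in> G" | "x = v" "y \<in> V" "\<forall>z. (z, y) \<notin> G" "(y, v) \<notin> G\<^sup>*"
  using assms unfolding graft_def by blast

lemma rtrancl_graft_imp_rtrancl:
  assumes "(u, w) \<in> (graft V G v)\<^sup>*" "(u, v) \<notin> G\<^sup>*"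
  shows "(u, w) \<in> G\<^sup>*"
  using assms(1)
proof (induction rule: rtrancl_induct)
  case (step x y)
  from step(2) show ?case
    by (cases rule: graft_cases) (use step(3) assms(2) in \<open>auto intro: rtrancl_into_rtrancl\<close>)
qed simp

lemma acyclic_graft:
  assumes "acyclic G"
  shows "acyclic (graft V G v)"
proof -
  let ?T = "graft V G v"
  have "G \<subseteq> ?T" unfolding graft_def by blast
  have walk: "(x, y) \<in> G\<^sup>+ \<or> (\<exists>u. (u, v) \<notin> G\<^sup>* \<and> (u, y) \<in> ?T\<^sup>* \<and> (x, v) \<in> ?T\<^sup>*)"
    if "(x, y) \<in> ?T\<^sup>+" for x y
    using that
  proof (induction rule: trancl_induct)
    case (base y)
    then show ?case by (cases rule: graft_cases) auto
  next
    case (step y z)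
    from step(2) show ?case
    proof (cases rule: graft_cases)
      case 1
      then have "(y, z) \<in> ?T" using \<open>G \<subseteq> ?T\<close> by blast
      with 1 step(3) show ?thesis by (blast intro: trancl_into_trancl rtrancl_into_rtrancl)
    next
      case 2
      then show ?thesis using step(1) by (blast intro: trancl_into_rtrancl)
    qed
  qed
  show ?thesis unfolding acyclic_def
  proof (intro allI notI)
    fix x assume "(x, x) \<in> ?T\<^sup>+"
    moreover have "(x, x) \<notin> G\<^sup>+" using assms by (simp add: acyclic_def)
    ultimately obtain u where u: "(u, v) \<notin> G\<^sup>*" "(u, x) \<in> ?T\<^sup>*" "(x, v) \<in> ?T\<^sup>*"
      using walk by blast
    from u(2,3) have "(u, v) \<in> ?T\<^sup>*" by (rule rtrancl_trans)
    from rtrancl_graft_imp_rtrancl[OF this u(1)] u(1) show False by contradiction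
  qed
qed

lemma unique_parents_graft:
  assumes "unique_parents G"
  shows "unique_parents (graft V G v)"
  unfolding unique_parents_def
proof (intro allI impI)
  fix x y z assume xz: "(x, z) \<in> graft V G v" and yz: "(y, z) \<in> graft V G v"
  from xz show "x = y"
  proof (cases rule: graft_cases)
    case 1
    from yz show ?thesis by (cases rule: graft_cases) (use 1 assms in \<open>auto dest: unique_parentsD\<close>)
  next
    case 2
    from yz show ?thesis by (cases rule: graft_cases) (use 2 in auto)
  qed
qed

lemma rooted_tree_graft:
  assumes "finite G" "acyclic G" "unique_parents G" "G \<subseteq> V \<times> V" "v \<in> V"
    and "(r, v) \<in> G\<^sup>*" "\<forall>z. (z, r) \<notin> G"
  shows "rooted_tree V (graft V G v) r"
proof -
  let ?T = "graft V G v"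
  have GT: "(a, b) \<in> G\<^sup>* \<Longrightarrow> (a, b) \<in> ?T\<^sup>*" for a b
    using rtrancl_mono[of G ?T] unfolding graft_def by blast
  have in_V: "a \<in> V" if "(a, w) \<in> G\<^sup>*" "w \<in> V" for a w
    using that assms(4) by (metis converse_rtranclE mem_Sigma_iff subsetD)
  have reach: "(r, w) \<in> ?T\<^sup>*" if "w \<in> V" for w
  proof -
    obtain a where a: "(a, w) \<in> G\<^sup>*" "\<forall>z. (z, a) \<notin> G"
      using finite_acyclic_obtain_source[OF assms(1,2)] by blast
    show ?thesis
    proof (cases "(a, v) \<in> G\<^sup>*")
      case True
      with a show ?thesis
        using sources_rtrancl_unique[OF assms(3) True assms(6) a(2) assms(7)] GT by blast
    next
      case False
      then have "(v, a) \<in> ?T" using a(2) in_V[OF a(1) that] unfolding graft_def by blast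
      with GT[OF assms(6)] have "(r, a) \<in> ?T\<^sup>*" by (rule rtrancl_into_rtrancl)
      then show ?thesis using GT[OF a(1)] by (rule rtrancl_trans)
    qed
  qed
  have "?T \<subseteq> V \<times> V" using assms(4,5) unfolding graft_def by auto
  moreover have "r \<in> V" using in_V assms(5,6) by blast
  ultimately show ?thesis
    using acyclic_graft[OF assms(2)] unique_parents_graft[OF assms(3)] reach
    unfolding rooted_tree_iff by blast
qed

section \<open>The subcomplexes \<open>S\<^sub>T\<close>\<close>

lemma mem_join_family_two_points_iff:
  "B \<in> join_family I (\<lambda>y. two_points (p y, y) (c, y)) \<longleftrightarrow>
    (\<forall>(x, y)\<in>B. y \<in> I \<and> (x = p y \<or> x = c)) \<and> (\<forall>x x' y. (x, y) \<in> B \<longrightarrow> (x', y) \<in> B \<longrightarrow> x = x')"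
proof
  assume "B \<in> join_family I (\<lambda>y. two_points (p y, y) (c, y))"
  then obtain f where B: "B = (\<Union>y\<in>I. f y)" and f: "\<forall>y\<in>I. f y \<in> {{}, {(p y, y)}, {(c, y)}}"
    unfolding join_family_def two_points_def by blast
  then have "snd e = y" if "y \<in> I" "e \<in> f y" for y e
    using that by auto
  then show "(\<forall>(x, y)\<in>B. y \<in> I \<and> (x = p y \<or> x = c)) \<and>
      (\<forall>x x' y. (x, y) \<in> B \<longrightarrow> (x', y) \<in> B \<longrightarrow> x = x')"
    using f unfolding B by fastforce
next
  assume B: "(\<forall>(x, y)\<in>B. y \<in> I \<and> (x = p y \<or> x = c)) \<and>
    (\<forall>x x' y. (x, y) \<in> B \<longrightarrow> (x', y) \<in> B \<longrightarrow> x = x')"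
  define f where "f y = {e \<in> B. snd e = y}" for y
  have "f y \<in> two_points (p y, y) (c, y)" if "y \<in> I" for y
  proof (cases "f y = {}")
    case False
    then obtain x where "(x, y) \<in> B" unfolding f_def by auto
    then have "f y = {(x, y)}" "x = p y \<or> x = c" using B unfolding f_def by auto
    then show ?thesis unfolding two_points_def by auto
  qed (simp add: two_points_def)
  moreover have "B = (\<Union>y\<in>I. f y)"
  proof (intro equalityI subsetI)
    fix e assume "e \<in> B"
    then show "e \<in> (\<Union>y\<in>I. f y)" using B unfolding f_def by (cases e) auto
  qed (auto simp: f_def)
  ultimately have "B = (\<Union>y\<in>I. f y) \<and> (\<forall>y\<in>I. f y \<in> two_points (p y, y) (c, y))"
    by blast
  then show "B \<in> join_family I (\<lambda>y. two_points (p y, y) (c, y))"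
    unfolding join_family_def by blast
qed

lemma mem_join_simplex_boundary_iff:
  assumes "\<And>B. B \<in> K \<Longrightarrow> B \<inter> \<sigma> = {}"
  shows "F \<in> join (simplex_boundary \<sigma>) K \<longleftrightarrow> \<not> \<sigma> \<subseteq> F \<and> F - \<sigma> \<in> K"
proof
  assume "F \<in> join (simplex_boundary \<sigma>) K"
  then obtain A B where "F = A \<union> B" "A \<subset> \<sigma>" "B \<in> K"
    unfolding join_def simplex_boundary_def by blast
  moreover from this have "B \<inter> \<sigma> = {}" using assms by blast
  ultimately have "F - \<sigma> = B" "\<not> \<sigma> \<subseteq> F" by blast+
  with \<open>B \<in> K\<close> show "\<not> \<sigma> \<subseteq> F \<and> F - \<sigma> \<in> K" by simp
next
  assume "\<not> \<sigma> \<subseteq> F \<and> F - \<sigma> \<in> K"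
  then have "F = (F \<inter> \<sigma>) \<union> (F - \<sigma>)" "F \<inter> \<sigma> \<subset> \<sigma>" "F - \<sigma> \<in> K" by blast+
  then show "F \<in> join (simplex_boundary \<sigma>) K"
    unfolding join_def simplex_boundary_def by blast
qed

lemma sigma_T_eq_cycle_edges:
  assumes "rooted_tree V T r" "c \<in> V"
  shows "sigma_T V T c = cycle_edges (root_path V T c)"
proof -
  have "dpath T r c (root_path V T c)" using assms by (rule root_path_dpath)
  then show ?thesis
    unfolding sigma_T_def cycle_edges_def path_edges_def tree_root_eq[OF assms(1)] Let_def
    by (simp add: dpath_def)
qed

lemma mem_S_T_iff:
  assumes "rooted_tree V T r" "c \<in> V"
  defines "P \<equiv> root_path V T c"
  shows "F \<in> S_T V T c \<longleftrightarrow> \<not> cycle_edges P \<subseteq> F \<and>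
    (\<forall>(x, y)\<in>F - cycle_edges P. y \<in> V - set P \<and> (x = parent T y \<or> x = c)) \<and>
    (\<forall>x x' y. (x, y) \<in> F - cycle_edges P \<longrightarrow> (x', y) \<in> F - cycle_edges P \<longrightarrow> x = x')"
proof -
  have "P \<noteq> []" using root_path_dpath[OF assms(1,2)] by (simp add: P_def dpath_def)
  then have "snd ` cycle_edges P \<subseteq> set P" using cycle_edges_subset by fastforce
  then have "B \<inter> cycle_edges P = {}"
    if "B \<in> join_family (V - set P) (\<lambda>y. two_points (parent T y, y) (c, y))" for B
    using that unfolding mem_join_family_two_points_iff by fastforce
  then have "F \<in> join (simplex_boundary (cycle_edges P))
      (join_family (V - set P) (\<lambda>y. two_points (parent T y, y) (c, y))) \<longleftrightarrow>
    \<not> cycle_edges P \<subseteq> F \<and>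
      F - cycle_edges P \<in> join_family (V - set P) (\<lambda>y. two_points (parent T y, y) (c, y))"
    by (rule mem_join_simplex_boundary_iff)
  then show ?thesis
    unfolding S_T_def sigma_T_eq_cycle_edges[OF assms(1,2)] P_def[symmetric]
      mem_join_family_two_points_iff .
qed

text \<open>A walk in \<open>A \<union> B\<close> that has entered \<open>U\<close> stays in \<open>U\<close> and follows \<open>T\<close>; before that,
  it uses only \<open>A\<close>.\<close>
lemma acyclic_Un_absorbing:
  assumes "acyclic A" "acyclic T" "A \<subseteq> (- U) \<times> (- U)" "B \<subseteq> UNIV \<times> U"
    and "\<And>x y. (x, y) \<in> B \<Longrightarrow> x \<in> U \<Longrightarrow> (x, y) \<in> T"
  shows "acyclic (A \<union> B)"
proof -
  have inside: "(u, w) \<in> T\<^sup>+" if "(u, w) \<in> (A \<union> B)\<^sup>+" "u \<in> U" for u w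
  proof -
    have "(u, w) \<in> T\<^sup>+ \<and> w \<in> U" using that
    proof (induction rule: trancl_induct)
      case (step y z)
      then have "(y, z) \<in> B" using assms(3) by blast
      then show ?case using step assms(4,5) by (blast intro: trancl_into_trancl)
    qed (use assms(3-5) in blast)
    then show ?thesis by blast
  qed
  have outside: "(u, w) \<in> A\<^sup>+" if "(u, w) \<in> (A \<union> B)\<^sup>+" "u \<notin> U" "w \<notin> U" for u w
    using that
  proof (induction rule: trancl_induct)
    case (step y z)
    then have "(y, z) \<in> A" using assms(4) by blast
    moreover from this have "y \<notin> U" using assms(3) by blast
    ultimately show ?case using step by (blast intro: trancl_into_trancl)
  qed (use assms(4) in blast)
  show ?thesis
    using inside outside assms(1,2) unfolding acyclic_def by blast
qed

lemma root_ne_leaf: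
  assumes "rooted_tree V T r" "is_leaf V T c" "c' \<in> V" "c' \<noteq> c"
  shows "r \<noteq> c"
proof
  assume "r = c"
  then have "(c, c') \<in> T\<^sup>*" using assms(1,3) by (simp add: rooted_tree_iff)
  then show False using assms(2,4) by (metis converse_rtranclE is_leaf_def)
qed

lemma S_T_subset_tree_complex:
  assumes cs: "complete_source V E c" and T: "T \<in> trees_leaf V E c" and "c' \<in> V" "c' \<noteq> c"
  shows "S_T V T c \<subseteq> tree_complex E"
proof
  fix F assume F: "F \<in> S_T V T c"
  obtain r where R: "rooted_tree V T r" and TE: "T \<subseteq> E" and leaf: "is_leaf V T c"
    using T by (auto simp: trees_leaf_def spanning_tree_def)
  have cV: "c \<in> V" and "r \<noteq> c" using leaf root_ne_leaf[OF R leaf assms(3,4)] by (auto simp: is_leaf_def)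
  have ac: "acyclic T" and "r \<in> V" using R by (auto simp: rooted_tree_iff)
  define P where "P = root_path V T c"
  define \<sigma> where "\<sigma> = cycle_edges P"
  define U where "U = V - set P"
  have dp: "dpath T r c P" unfolding P_def using R cV by (rule root_path_dpath)
  then have \<sigma>: "\<sigma> \<subseteq> set P \<times> set P" "r \<in> set P" "c \<in> set P" "\<sigma> \<subseteq> path_edges P \<union> {(c, r)}"
    using cycle_edges_subset unfolding \<sigma>_def cycle_edges_def by (auto simp: dpath_iff_path_edges)
  have "path_edges P \<subseteq> T" using dp by (simp add: dpath_iff_path_edges)
  have dist: "distinct P" using dp by (simp add: dpath_def)
  from F have memF: "\<not> \<sigma> \<subseteq> F \<and> (\<forall>(x, y)\<in>F - \<sigma>. y \<in> U \<and> (x = parent T y \<or> x = c)) \<and>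
      (\<forall>x x' y. (x, y) \<in> F - \<sigma> \<longrightarrow> (x', y) \<in> F - \<sigma> \<longrightarrow> x = x')"
    unfolding mem_S_T_iff[OF R cV] P_def[symmetric] \<sigma>_def[symmetric] U_def[symmetric] .
  then have out: "y \<in> U \<and> (x = parent T y \<or> x = c)" if "(x, y) \<in> F - \<sigma>" for x y
    using that by fast
  have parent_T: "(parent T y, y) \<in> T" if "y \<in> U" for y
    using parent_in_tree[OF R, of y] that \<sigma>(2) by (auto simp: U_def)
  have "F \<subseteq> E"
  proof
    fix e assume "e \<in> F"
    then obtain x y where e: "e = (x, y)" "(x, y) \<in> F" by (cases e) auto
    show "e \<in> E"
    proof (cases "(x, y) \<in> \<sigma>")
      case True
      then have "(x, y) \<in> T \<or> (x, y) = (c, r)" using \<sigma>(4) \<open>path_edges P \<subseteq> T\<close> by blast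
      then show ?thesis using TE cs \<open>r \<in> V\<close> \<open>r \<noteq> c\<close> e(1) by (auto simp: complete_source_def)
    next
      case False
      then have "y \<in> U" "x = parent T y \<or> x = c" using out e(2) by blast+
      moreover from this have "y \<noteq> c" "y \<in> V" using \<sigma>(3) by (auto simp: U_def)
      ultimately show ?thesis using parent_T TE cs e(1) by (auto simp: complete_source_def)
    qed
  qed
  moreover have "unique_parents F"
    unfolding unique_parents_def
  proof (intro allI impI)
    fix x x' y assume xy: "(x, y) \<in> F" and x'y: "(x', y) \<in> F"
    show "x = x'"
    proof (cases "y \<in> U")
      case True
      then have "(x, y) \<notin> \<sigma>" "(x', y) \<notin> \<sigma>" using \<sigma>(1) by (auto simp: U_def)
      then show ?thesis using memF xy x'y by blast
    next
      case False
      then have "(x, y) \<in> \<sigma>" "(x', y) \<in> \<sigma>" using out xy x'y by blast+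
      then show ?thesis
        using unique_parents_cycle_edges[OF dist] unfolding \<sigma>_def by (blast dest: unique_parentsD)
    qed
  qed
  moreover have "acyclic (F \<inter> \<sigma> \<union> (F - \<sigma>))"
  proof (rule acyclic_Un_absorbing[where U = U and T = T])
    have "F \<inter> \<sigma> \<subset> cycle_edges P" using memF unfolding \<sigma>_def by blast
    then show "acyclic (F \<inter> \<sigma>)" by (rule acyclic_psubset_cycle_edges[OF dist])
    show "F \<inter> \<sigma> \<subseteq> (- U) \<times> (- U)" using \<sigma>(1) by (auto simp: U_def)
    show "F - \<sigma> \<subseteq> UNIV \<times> U" using out by fast
    show "(x, y) \<in> T" if "(x, y) \<in> F - \<sigma>" "x \<in> U" for x y
    proof -
      have "x \<noteq> c" using that(2) \<sigma>(3) by (auto simp: U_def)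
      then show ?thesis using out[OF that(1)] parent_T by auto
    qed
  qed (rule ac)
  ultimately show "F \<in> tree_complex E" by (simp add: tree_complex_def directed_forest_iff Int_Diff_Un)
qed

lemma forest_mem_S_T_graft:
  assumes "E \<subseteq> V \<times> V" "directed_forest E F" "c \<in> V"
    and G: "G = {e \<in> F. fst e \<noteq> c}"
    and R: "rooted_tree V (graft V G c') r" and "(r, c') \<in> G\<^sup>*" "\<forall>z. (z, r) \<notin> G"
  shows "F \<in> S_T V (graft V G c') c"
proof -
  let ?T = "graft V G c'"
  define P where "P = root_path V ?T c"
  have dp: "dpath ?T r c P" unfolding P_def using R assms(3) by (rule root_path_dpath)
  have FE: "F \<subseteq> E" and upF: "unique_parents F" and acF: "acyclic F"
    using assms(2) by (auto simp: directed_forest_iff)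
  have "G \<subseteq> F" using G by blast
  then have upG: "unique_parents G" using upF by (rule unique_parents_subset[rotated])
  have GT: "G \<subseteq> ?T" unfolding graft_def by blast
  have upT: "unique_parents ?T" using R by (simp add: rooted_tree_iff)
  have "\<not> cycle_edges P \<subseteq> F"
    using not_acyclic_cycle_edges dp acF acyclic_subset by (metis dpath_def)
  moreover have into_P: "(x, y) \<in> cycle_edges P" if xy: "(x, y) \<in> F" and "y \<in> set P" for x y
  proof (cases "y = r")
    case True
    then have "x = c" using xy assms(7) G by auto
    then show ?thesis using True dp by (auto simp: cycle_edges_def dpath_def)
  next
    case y_ne_r: False
    show ?thesis
    proof (cases "x = c")
      case False
      then have "(x, y) \<in> ?T" using xy G GT by auto
      moreover obtain w where "(w, y) \<in> path_edges P"
        using mem_set_imp_path_edge[OF \<open>y \<in> set P\<close>] y_ne_r dp by (metis dpath_def)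
      moreover from this have "(w, y) \<in> ?T" using dp by (auto simp: dpath_iff_path_edges)
      ultimately show ?thesis using upT by (auto simp: cycle_edges_def dest: unique_parentsD)
    next
      case True
      have no_parent: "\<forall>z. (z, y) \<notin> G" using xy True upF G by (auto dest: unique_parentsD)
      have "(y, c') \<notin> G\<^sup>*"
        using sources_rtrancl_unique[OF upG _ assms(6) no_parent assms(7)] y_ne_r by blast
      with dpath_rtrancl(2)[OF dp \<open>y \<in> set P\<close>] have "(y, c) \<in> G\<^sup>*"
        by (rule rtrancl_graft_imp_rtrancl)
      then have "(y, c) \<in> F\<^sup>*" using rtrancl_mono[OF \<open>G \<subseteq> F\<close>] by blast
      with xy True have "(c, c) \<in> F\<^sup>+" by (simp add: rtrancl_into_trancl2)
      with acF show ?thesis by (simp add: acyclic_def)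
    qed
  qed
  moreover have "y \<in> V - set P \<and> (x = parent ?T y \<or> x = c)" if xy: "(x, y) \<in> F - cycle_edges P"
    for x y
  proof -
    have "y \<notin> set P" using xy into_P by blast
    moreover have "y \<in> V" using xy FE assms(1) by blast
    moreover have "x = parent ?T y" if "x \<noteq> c"
    proof -
      have "(x, y) \<in> G" using xy that G by simp
      then show ?thesis using parent_eq[OF upT] GT by blast
    qed
    ultimately show ?thesis by blast
  qed
  moreover have "x = x'" if "(x, y) \<in> F - cycle_edges P" "(x', y) \<in> F - cycle_edges P" for x x' y
    using that upF by (blast dest: unique_parentsD)
  ultimately show ?thesis
    unfolding mem_S_T_iff[OF R assms(3)] P_def[symmetric] by blast
qed

lemma directed_forest_mem_some_S_T:
  assumes dg: "digraph V E" and cs: "complete_source V E c" and cs': "complete_source V E c'"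
    and "c \<noteq> c'" and F: "directed_forest E F"
  shows "\<exists>T\<in>trees_leaf V E c. F \<in> S_T V T c"
proof -
  have EV: "E \<subseteq> V \<times> V" and "finite V" using dg by (auto simp: digraph_def)
  have cV: "c \<in> V" and c'V: "c' \<in> V" using cs cs' by (auto simp: complete_source_def)
  define G where "G = {e \<in> F. fst e \<noteq> c}"
  have "G \<subseteq> F" by (auto simp: G_def)
  then have GE: "G \<subseteq> E" and GV: "G \<subseteq> V \<times> V" using F EV by (auto simp: directed_forest_iff)
  then have "finite G" using \<open>finite V\<close> by (meson finite_SigmaI finite_subset)
  moreover have "acyclic G" using F acyclic_subset[OF _ \<open>G \<subseteq> F\<close>] by (simp add: directed_forest_iff)
  moreover have "unique_parents G"
    using F unique_parents_subset[OF _ \<open>G \<subseteq> F\<close>] by (simp add: directed_forest_iff)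
  moreover obtain r where r: "(r, c') \<in> G\<^sup>*" "\<forall>z. (z, r) \<notin> G"
    using finite_acyclic_obtain_source[OF calculation(1,2)] by blast
  ultimately have R: "rooted_tree V (graft V G c') r"
    using rooted_tree_graft[OF _ _ _ GV c'V r] by blast
  have "graft V G c' \<subseteq> E"
  proof
    fix e assume "e \<in> graft V G c'"
    then obtain x y where "e = (x, y)" "(x, y) \<in> graft V G c'" by (cases e) auto
    from this(2) show "e \<in> E"
    proof (cases rule: graft_cases)
      case 2
      then have "y \<noteq> c'" by auto
      with 2 cs' show ?thesis using \<open>e = (x, y)\<close> by (simp add: complete_source_def)
    qed (use GE \<open>e = (x, y)\<close> in blast)
  qed
  moreover have "is_leaf V (graft V G c') c"
    using cV \<open>c \<noteq> c'\<close> unfolding is_leaf_def graft_def G_def by auto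
  ultimately have "graft V G c' \<in> trees_leaf V E c"
    using R unfolding trees_leaf_def spanning_tree_def by blast
  moreover have "F \<in> S_T V (graft V G c') c"
    using forest_mem_S_T_graft[OF EV F cV G_def R r] .
  ultimately show ?thesis by blast
qed

theorem mainTheorem3:
  fixes V :: "'a set" and E :: "('a \<times> 'a) set" and c c' :: 'a
  assumes "digraph V E"
    and "complete_source V E c" and "complete_source V E c'" and "c \<noteq> c'"
  shows "(\<forall>T \<in> trees_leaf V E c. S_T V T c \<subseteq> tree_complex E)
         \<and> tree_complex E = (\<Union>T \<in> trees_leaf V E c. S_T V T c)"
proof -
  have "c' \<in> V" "c' \<noteq> c" using assms(3,4) by (auto simp: complete_source_def)
  then have "\<forall>T \<in> trees_leaf V E c. S_T V T c \<subseteq> tree_complex E"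
    using S_T_subset_tree_complex[OF assms(2)] by blast
  moreover have "tree_complex E \<subseteq> (\<Union>T \<in> trees_leaf V E c. S_T V T c)"
    using directed_forest_mem_some_S_T[OF assms] by (auto simp: tree_complex_def)
  ultimately show ?thesis by blast
qed

end
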